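(* There exist metric spaces $X,Y$ and a Lipschitz function $f\colon X\to Y$ such that $\operatorname{asdim}(Y)=0$ and $\sup\{\operatorname{asdim}(f^{-1}(B)) : B\subset Y \text{ bounded}\}=0$, but $\operatorname{asdim}(X)>0$.
   Context: For a metric space $Z$, $\operatorname{asdim}(Z)\le n$ iff for every $r>0$ there are $D<\infty$ and families $\mathcal U_1,\dots,\mathcal U_{n+1}$ of subsets of $Z$ covering $Z$, each $r$-disjoint (points in different members of a family are at distance $\ge r$), with members of diameter $\le D$; $\operatorname{asdim}(Z)$ is the least such $n$. *)

theory Defs
  imports "HOL-Analysis.Analysis" "HOL-Library.Extended_Nat"
begin

definition asdim_le :: "'a metric \<Rightarrow> nat \<Rightarrow> bool" where
  "asdim_le m n \<longleftrightarrow>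
     (\<forall>r>0. \<exists>D::real. \<exists>U :: nat \<Rightarrow> 'a set set.
        (\<forall>i\<le>n. \<forall>A\<in>U i. A \<subseteq> mspace m) \<and>
        mspace m \<subseteq> (\<Union>i\<le>n. \<Union>(U i)) \<and>
        (\<forall>i\<le>n. \<forall>A\<in>U i. \<forall>B\<in>U i. A \<noteq> B \<longrightarrow>
            (\<forall>x\<in>A. \<forall>y\<in>B. r \<le> mdist m x y)) \<and>
        (\<forall>i\<le>n. \<forall>A\<in>U i. \<forall>x\<in>A. \<forall>y\<in>A. mdist m x y \<le> D))"

definition asdim :: "'a metric \<Rightarrow> enat" where
  "asdim m = (if \<exists>n. asdim_le m n then enat (LEAST n. asdim_le m n) else \<infinity>)"

end

theory Submission
  imports Defs
begin

text \<open>
  Let \<open>Y\<close> be \<open>\<real>\<close> with \<open>d(a,b) = max |a| |b| + 2\<close> for \<open>a \<noteq> b\<close>. For any \<open>r\<close>, the points of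
  absolute value \<open>\<ge> r\<close> are \<open>r\<close>-far from everything else, so the ball of radius \<open>r\<close> at \<open>0\<close>
  together with these singletons is an \<open>r\<close>-disjoint uniformly bounded cover: \<open>asdim Y = 0\<close>.
  Let \<open>X\<close> be \<open>[0,\<infinity>)\<close> in which the block \<open>[n, n+1)\<close> carries its usual metric scaled by \<open>n + 1\<close>
  and distinct blocks are at distance \<open>max n m + 2\<close>. The map \<open>x \<mapsto> \<lfloor>x\<rfloor>\<close> is \<open>1\<close>-Lipschitz
  and preimages of bounded sets are bounded, hence of asymptotic dimension \<open>0\<close>. But the
  block \<open>[n, n+1)\<close> contains a chain of \<open>n + 1\<close> points with consecutive distances \<open>1\<close> and
  endpoints at distance \<open>n\<close>; such a chain cannot leave a member of a \<open>2\<close>-disjoint cover,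
  so no such cover of \<open>X\<close> is uniformly bounded.
\<close>

lemma asdim_eq_0_iff: "asdim m = 0 \<longleftrightarrow> asdim_le m 0"
proof
  assume "asdim m = 0"
  then have "\<exists>n. asdim_le m n" and "(LEAST n. asdim_le m n) = 0"
    unfolding asdim_def zero_enat_def by (auto split: if_splits)
  then show "asdim_le m 0"
    by (metis LeastI_ex)
qed (auto simp: asdim_def zero_enat_def)

lemma asdim_le_0I:
  assumes "\<And>r. r > 0 \<Longrightarrow> \<exists>D \<U>. (\<forall>A\<in>\<U>. A \<subseteq> mspace m) \<and> mspace m \<subseteq> \<Union>\<U> \<and>
        (\<forall>A\<in>\<U>. \<forall>B\<in>\<U>. A \<noteq> B \<longrightarrow> (\<forall>x\<in>A. \<forall>y\<in>B. r \<le> mdist m x y)) \<and>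
        (\<forall>A\<in>\<U>. \<forall>x\<in>A. \<forall>y\<in>A. mdist m x y \<le> D)"
  shows "asdim_le m 0"
  unfolding asdim_le_def
proof (intro allI impI)
  fix r :: real
  assume "r > 0"
  then obtain D \<U> where "(\<forall>A\<in>\<U>. A \<subseteq> mspace m) \<and> mspace m \<subseteq> \<Union>\<U> \<and>
        (\<forall>A\<in>\<U>. \<forall>B\<in>\<U>. A \<noteq> B \<longrightarrow> (\<forall>x\<in>A. \<forall>y\<in>B. r \<le> mdist m x y)) \<and>
        (\<forall>A\<in>\<U>. \<forall>x\<in>A. \<forall>y\<in>A. mdist m x y \<le> D)"
    using assms[OF \<open>r > 0\<close>] by (elim exE)
  then show "\<exists>D U. (\<forall>i\<le>(0::nat). \<forall>A\<in>U i. A \<subseteq> mspace m) \<and> mspace m \<subseteq> (\<Union>i\<le>(0::nat). \<Union>(U i)) \<and>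
      (\<forall>i\<le>(0::nat). \<forall>A\<in>U i. \<forall>B\<in>U i. A \<noteq> B \<longrightarrow> (\<forall>x\<in>A. \<forall>y\<in>B. r \<le> mdist m x y)) \<and>
      (\<forall>i\<le>(0::nat). \<forall>A\<in>U i. \<forall>x\<in>A. \<forall>y\<in>A. mdist m x y \<le> D)"
    by (intro exI[of _ D] exI[of _ "\<lambda>_. \<U>"]) simp
qed

lemma asdim_le_0E:
  assumes "asdim_le m 0" "r > 0"
  obtains D \<U> where "mspace m \<subseteq> \<Union>\<U>"
    "\<And>A B x y. A \<in> \<U> \<Longrightarrow> B \<in> \<U> \<Longrightarrow> A \<noteq> B \<Longrightarrow> x \<in> A \<Longrightarrow> y \<in> B \<Longrightarrow> r \<le> mdist m x y"
    "\<And>A x y. A \<in> \<U> \<Longrightarrow> x \<in> A \<Longrightarrow> y \<in> A \<Longrightarrow> mdist m x y \<le> D"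
proof -
  obtain D U where "mspace m \<subseteq> \<Union>(U 0)"
    "\<forall>A\<in>U 0. \<forall>B\<in>U 0. A \<noteq> B \<longrightarrow> (\<forall>x\<in>A. \<forall>y\<in>B. r \<le> mdist m x y)"
    "\<forall>A\<in>U 0. \<forall>x\<in>A. \<forall>y\<in>A. mdist m x y \<le> D"
    using assms unfolding asdim_le_def by (drule_tac x=r in spec) auto
  then show thesis
    by (intro that[of "U 0" D]) auto
qed

lemma asdim_le_0_submetric_mbounded:
  assumes "Metric_space.mbounded (mspace m) (mdist m) S"
  shows "asdim_le (submetric m S) 0"
proof (rule asdim_le_0I)
  obtain D where "\<forall>x\<in>S. \<forall>y\<in>S. mdist m x y \<le> D"
    using assms unfolding Metric_space.mbounded_alt[OF Metric_space_mspace_mdist] by blast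
  then show "\<exists>D \<U>. (\<forall>A\<in>\<U>. A \<subseteq> mspace (submetric m S)) \<and> mspace (submetric m S) \<subseteq> \<Union>\<U> \<and>
      (\<forall>A\<in>\<U>. \<forall>B\<in>\<U>. A \<noteq> B \<longrightarrow> (\<forall>x\<in>A. \<forall>y\<in>B. r \<le> mdist (submetric m S) x y)) \<and>
      (\<forall>A\<in>\<U>. \<forall>x\<in>A. \<forall>y\<in>A. mdist (submetric m S) x y \<le> D)" for r
    by (intro exI[of _ D] exI[of _ "{mspace (submetric m S)}"]) simp
qed

text \<open>A chain whose steps are shorter than \<open>r\<close> never leaves the member of an \<open>r\<close>-disjoint
  cover it starts in.\<close>
lemma asdim_le_0_chains_bounded:
  assumes "asdim_le m 0" "r > 0"
  obtains D where "\<And>n p. (\<And>k. k \<le> n \<Longrightarrow> p k \<in> mspace m) \<Longrightarrow>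
      (\<And>k. k < n \<Longrightarrow> mdist m (p k) (p (Suc k)) < r) \<Longrightarrow> mdist m (p 0) (p n) \<le> D"
proof -
  obtain D \<U> where
    cover: "mspace m \<subseteq> \<Union>\<U>" and
    disjoint: "\<And>A B x y. A \<in> \<U> \<Longrightarrow> B \<in> \<U> \<Longrightarrow> A \<noteq> B \<Longrightarrow> x \<in> A \<Longrightarrow> y \<in> B \<Longrightarrow> r \<le> mdist m x y" and
    diam: "\<And>A x y. A \<in> \<U> \<Longrightarrow> x \<in> A \<Longrightarrow> y \<in> A \<Longrightarrow> mdist m x y \<le> D"
    using asdim_le_0E[OF assms] by metis
  have "mdist m (p 0) (p n) \<le> D"
    if p: "\<And>k. k \<le> n \<Longrightarrow> p k \<in> mspace m" and steps: "\<And>k. k < n \<Longrightarrow> mdist m (p k) (p (Suc k)) < r"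
    for n p
  proof -
    obtain A where A: "A \<in> \<U>" "p 0 \<in> A"
      using cover p[of 0] by blast
    have "p k \<in> A" if "k \<le> n" for k
      using that
    proof (induction k)
      case (Suc k)
      obtain B where "B \<in> \<U>" "p (Suc k) \<in> B"
        using cover p[OF Suc.prems] by blast
      with Suc.IH Suc.prems A disjoint[of A B "p k" "p (Suc k)"] steps[of k] show ?case
        by force
    qed (use A in simp)
    then show ?thesis
      using diam A by blast
  qed
  then show thesis
    using that by blast
qed

definition sparse_dist :: "real \<Rightarrow> real \<Rightarrow> real" where
  "sparse_dist a b = (if a = b then 0 else max \<bar>a\<bar> \<bar>b\<bar> + 2)"

lemma Metric_space_sparse: "Metric_space UNIV sparse_dist"
  by unfold_locales (auto simp: sparse_dist_def max.commute)

lemma asdim_le_0_sparse: "asdim_le (metric (UNIV, sparse_dist)) 0"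
proof (rule asdim_le_0I)
  interpret Metric_space UNIV sparse_dist
    by (rule Metric_space_sparse)
  fix r :: real
  assume "r > 0"
  define \<U> where "\<U> = insert {y. \<bar>y\<bar> < r} {{y} | y. r \<le> \<bar>y\<bar>}"
  have "y \<in> \<Union>\<U>" for y
    by (cases "\<bar>y\<bar> < r") (auto simp: \<U>_def intro!: exI[of _ "{y}"])
  then have "UNIV \<subseteq> \<Union>\<U>"
    by blast
  moreover have "\<forall>A\<in>\<U>. \<forall>B\<in>\<U>. A \<noteq> B \<longrightarrow> (\<forall>x\<in>A. \<forall>y\<in>B. r \<le> sparse_dist x y)"
    by (auto simp: \<U>_def sparse_dist_def)
  moreover have "\<forall>A\<in>\<U>. \<forall>x\<in>A. \<forall>y\<in>A. sparse_dist x y \<le> r + 2"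
    using \<open>r > 0\<close> by (auto simp: \<U>_def sparse_dist_def)
  ultimately show "\<exists>D \<U>. (\<forall>A\<in>\<U>. A \<subseteq> mspace (metric (UNIV, sparse_dist))) \<and>
      mspace (metric (UNIV, sparse_dist)) \<subseteq> \<Union>\<U> \<and>
      (\<forall>A\<in>\<U>. \<forall>B\<in>\<U>. A \<noteq> B \<longrightarrow> (\<forall>x\<in>A. \<forall>y\<in>B. r \<le> mdist (metric (UNIV, sparse_dist)) x y)) \<and>
      (\<forall>A\<in>\<U>. \<forall>x\<in>A. \<forall>y\<in>A. mdist (metric (UNIV, sparse_dist)) x y \<le> D)"
    by (intro exI[of _ "r + 2"] exI[of _ \<U>]) simp
qed

lemma sparse_mbounded_imp_abs_bounded:
  assumes "Metric_space.mbounded UNIV sparse_dist B"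
  obtains K where "\<And>b. b \<in> B \<Longrightarrow> \<bar>b\<bar> \<le> K"
proof -
  interpret Metric_space UNIV sparse_dist
    by (rule Metric_space_sparse)
  obtain a e where "B \<subseteq> mcball a e"
    using assms mbounded_def by blast
  then have "\<bar>b\<bar> \<le> max \<bar>a\<bar> e" if "b \<in> B" for b
    using that by (auto simp: sparse_dist_def split: if_splits)
  then show thesis
    by (rule that)
qed

definition level :: "real \<Rightarrow> real" where
  "level x = real (nat \<lfloor>x\<rfloor>)"

definition blocks_dist :: "real \<Rightarrow> real \<Rightarrow> real" where
  "blocks_dist x y =
     (if level x = level y then (level x + 1) * \<bar>x - y\<bar> else max (level x) (level y) + 2)"

lemma level_nonneg: "0 \<le> level x"
  by (simp add: level_def)

lemma level_le: "0 \<le> x \<Longrightarrow> level x \<le> x"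
  by (simp add: level_def)

lemma less_level_add_1: "x < level x + 1"
  unfolding level_def by linarith

lemma level_add: "0 \<le> t \<Longrightarrow> t < 1 \<Longrightarrow> level (real n + t) = real n"
  unfolding level_def by (simp add: floor_unique)

lemma dist_lt_1_if_level_eq: "0 \<le> x \<Longrightarrow> 0 \<le> y \<Longrightarrow> level x = level y \<Longrightarrow> \<bar>x - y\<bar> < 1"
  using level_le less_level_add_1 by (smt (verit))

lemma Metric_space_blocks: "Metric_space {0..} blocks_dist"
proof
  fix x y :: real
  show "0 \<le> blocks_dist x y"
    using level_nonneg[of x] level_nonneg[of y] by (simp add: blocks_dist_def)
  show "blocks_dist x y = blocks_dist y x"
    by (auto simp: blocks_dist_def abs_minus_commute max.commute)
  show "blocks_dist x y = 0 \<longleftrightarrow> x = y"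
    using level_nonneg[of x] level_nonneg[of y] by (auto simp: blocks_dist_def)
next
  fix x y z :: real
  assume "x \<in> {0..}" "y \<in> {0..}" "z \<in> {0..}"
  note nonneg = level_nonneg[of x] level_nonneg[of y] level_nonneg[of z]
  show "blocks_dist x z \<le> blocks_dist x y + blocks_dist y z"
  proof (cases "level x = level z")
    case xz: True
    show ?thesis
    proof (cases "level x = level y")
      case True
      have "(level x + 1) * \<bar>x - z\<bar> \<le> (level x + 1) * (\<bar>x - y\<bar> + \<bar>y - z\<bar>)"
        using nonneg by (intro mult_left_mono) auto
      then show ?thesis
        using True xz by (simp add: blocks_dist_def distrib_left)
    next
      case False
      have "(level x + 1) * \<bar>x - z\<bar> \<le> level x + 1"
        using dist_lt_1_if_level_eq[OF _ _ xz] \<open>x \<in> {0..}\<close> \<open>z \<in> {0..}\<close> nonneg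
        by (intro mult_left_le) auto
      with False xz nonneg show ?thesis
        unfolding blocks_dist_def by (smt (verit))
    qed
  next
    case False
    then show ?thesis
      using nonneg by (auto simp: blocks_dist_def intro: add_increasing)
  qed
qed

lemma blocks_dist_0_le: "0 \<le> x \<Longrightarrow> blocks_dist 0 x \<le> x + 2"
  using level_le[of x] by (simp add: blocks_dist_def level_def)

lemma Lipschitz_continuous_map_level:
  "Lipschitz_continuous_map (metric ({0..}, blocks_dist)) (metric (UNIV, sparse_dist)) level"
proof -
  interpret X: Metric_space "{0..}" blocks_dist
    by (rule Metric_space_blocks)
  interpret Y: Metric_space UNIV sparse_dist
    by (rule Metric_space_sparse)
  show ?thesis
    unfolding Lipschitz_continuous_map_def
  proof (intro conjI exI[of _ 1] ballI)
    show "level \<in> mspace (metric ({0..}, blocks_dist)) \<rightarrow> mspace (metric (UNIV, sparse_dist))"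
      by simp
    fix x y
    show "mdist (metric (UNIV, sparse_dist)) (level x) (level y) \<le> 1 * mdist (metric ({0..}, blocks_dist)) x y"
      using level_nonneg[of x] level_nonneg[of y] by (simp add: blocks_dist_def sparse_dist_def)
  qed
qed

lemma blocks_mbounded_level_preimage:
  assumes "Metric_space.mbounded UNIV sparse_dist B"
  shows "Metric_space.mbounded {0..} blocks_dist (level -` B \<inter> {0..})"
proof -
  interpret Metric_space "{0..}" blocks_dist
    by (rule Metric_space_blocks)
  obtain K where K: "\<And>b. b \<in> B \<Longrightarrow> \<bar>b\<bar> \<le> K"
    using sparse_mbounded_imp_abs_bounded[OF assms] by blast
  have "blocks_dist 0 x \<le> K + 3" if x: "level x \<in> B" "0 \<le> x" for x
  proof -
    have "x \<le> K + 1"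
      using K[OF x(1)] less_level_add_1[of x] by linarith
    then show ?thesis
      using blocks_dist_0_le[OF x(2)] by linarith
  qed
  then have "level -` B \<inter> {0..} \<subseteq> mcball 0 (K + 3)"
    by (auto simp: in_mcball)
  then show ?thesis
    using mbounded_def by blast
qed

lemma not_asdim_le_0_blocks: "\<not> asdim_le (metric ({0..}, blocks_dist)) 0"
proof
  interpret Metric_space "{0..}" blocks_dist
    by (rule Metric_space_blocks)
  assume "asdim_le (metric ({0..}, blocks_dist)) 0"
  then obtain D where chain_bound: "\<And>n p. (\<And>k. k \<le> n \<Longrightarrow> p k \<in> {0..}) \<Longrightarrow>
      (\<And>k. k < n \<Longrightarrow> blocks_dist (p k) (p (Suc k)) < 2) \<Longrightarrow> blocks_dist (p 0) (p n) \<le> D"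
    by (rule asdim_le_0_chains_bounded[where r=2]) auto
  obtain n :: nat where "D < real n"
    using reals_Archimedean2 by blast
  define p where "p k = real n + real k / (real n + 1)" for k :: nat
  have dist_p: "blocks_dist (p k) (p l) = \<bar>real k - real l\<bar>" if "k \<le> n" "l \<le> n" for k l
  proof -
    have "level (p k) = real n" "level (p l) = real n"
      using that by (auto simp: p_def level_add)
    moreover have "p k - p l = (real k - real l) / (real n + 1)"
      by (simp add: p_def diff_divide_distrib)
    ultimately show ?thesis
      by (simp add: blocks_dist_def abs_divide)
  qed
  have "blocks_dist (p 0) (p n) \<le> D"
  proof (rule chain_bound)
    show "p k \<in> {0..}" for k
      by (simp add: p_def)
    show "blocks_dist (p k) (p (Suc k)) < 2" if "k < n" for k
      using that by (simp add: dist_p)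
  qed
  with dist_p[of 0 n] \<open>D < real n\<close> show False
    by simp
qed

theorem mainTheorem12:
  shows "\<exists>(X :: real metric) (Y :: real metric) f.
           Lipschitz_continuous_map X Y f \<and>
           asdim Y = 0 \<and>
           (SUP B\<in>{B. B \<subseteq> mspace Y \<and> Metric_space.mbounded (mspace Y) (mdist Y) B}.
               asdim (submetric X (f -` B \<inter> mspace X))) = 0 \<and>
           asdim X > 0"
proof (intro exI conjI)
  interpret X: Metric_space "{0..}" blocks_dist
    by (rule Metric_space_blocks)
  interpret Y: Metric_space UNIV sparse_dist
    by (rule Metric_space_sparse)
  let ?X = "metric ({0..}, blocks_dist)" and ?Y = "metric (UNIV, sparse_dist)"
  show "Lipschitz_continuous_map ?X ?Y level"
    by (rule Lipschitz_continuous_map_level)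
  show "asdim ?Y = 0"
    by (simp add: asdim_eq_0_iff asdim_le_0_sparse)
  show "asdim ?X > 0"
    by (simp add: zero_less_iff_neq_zero asdim_eq_0_iff not_asdim_le_0_blocks)
  have "asdim (submetric ?X (level -` B \<inter> mspace ?X)) = 0" if "Y.mbounded B" for B
    using asdim_le_0_submetric_mbounded[of ?X] blocks_mbounded_level_preimage[OF that]
    by (simp add: asdim_eq_0_iff)
  moreover have "Collect Y.mbounded \<noteq> {}"
    using Y.mbounded_empty by blast
  ultimately show "(SUP B\<in>{B. B \<subseteq> mspace ?Y \<and> Metric_space.mbounded (mspace ?Y) (mdist ?Y) B}.
      asdim (submetric ?X (level -` B \<inter> mspace ?X))) = 0"
    by (subst SUP_cong[OF refl, where D="\<lambda>_. 0"]) (auto simp: SUP_const)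
qed

end
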